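(* Let $\alpha\in\mathbb{N}$ and $n\geq 2$. Let $-\infty<\xi_1<\xi_2<\cdots<\xi_n<\infty$ be distinct real numbers and $w_1,\dots,w_n\in\mathbb{R}$ arbitrary, and let $Q_n(f)=\sum_{j=1}^n w_j f(\xi_j)$. Let \[ \sigma:=\begin{cases}\alpha & \text{if } \min_{j=1,\dots,n-1}(\xi_{j+1}-\xi_j)\leq 1,\\ 0 & \text{otherwise.}\end{cases} \] Then there exists a constant $c_\alpha>0$, depending only on $\alpha$, such that \[ e^{\mathrm{wor}}(Q_n,\mathscr{H}_\alpha)\geq c_\alpha \min_{i=1,\dots,n-1}(\xi_{i+1}-\xi_i)^{\sigma+1/2}\sum_{j=1}^{n-1}\mathrm{e}^{-\max(\xi_j^2,\xi_{j+1}^2)/2}\left(\sum_{k=1}^{n-1}\mathrm{e}^{-\mathbb{1}_{\geq 0}(\xi_k\xi_{k+1})\min(\xi_k^2,\xi_{k+1}^2)/2}\right)^{-1/2}, \] where $\mathbb{1}_{\geq 0}(x)=1$ if $x\geq 0$ and $0$ otherwise.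
   Context: Let $\rho(x)=\frac{1}{\sqrt{2\pi}}\mathrm{e}^{-x^2/2}$ and $L^2_\rho$ the space of (equivalence classes of) measurable $f:\mathbb{R}\to\mathbb{R}$ with $\|f\|_{L^2_\rho}^2=\int_\mathbb{R}|f(x)|^2\rho(x)\,\mathrm{d}x<\infty$. For $\alpha\in\mathbb{N}$, the weighted Sobolev space $\mathscr{H}_\alpha$ is the set of $f\in L^2_\rho$ having weak derivatives $f^{(\tau)}\in L^2_\rho$ for $\tau=1,\dots,\alpha$, with norm $\|f\|_\alpha=(\sum_{\tau=0}^\alpha\|f^{(\tau)}\|_{L^2_\rho}^2)^{1/2}$; elements are identified with their continuous representatives. Let $I(f)=\int_\mathbb{R}f(x)\rho(x)\,\mathrm{d}x$. For a quadrature rule $Q_n$, the worst-case error is $e^{\mathrm{wor}}(Q_n,\mathscr{H}_\alpha)=\sup_{0\neq f\in\mathscr{H}_\alpha}|I(f)-Q_n(f)|/\|f\|_\alpha$. *)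

theory Defs
  imports "HOL-Analysis.Analysis"
begin

definition gauss_rho :: "real \<Rightarrow> real" where
  "gauss_rho x = exp (- (x\<^sup>2) / 2) / sqrt (2 * pi)"

definition L2rho :: "(real \<Rightarrow> real) \<Rightarrow> bool" where
  "L2rho f \<longleftrightarrow> f \<in> borel_measurable lborel \<and>
     integrable lborel (\<lambda>x. (f x)\<^sup>2 * gauss_rho x)"

definition test_fun :: "(real \<Rightarrow> real) \<Rightarrow> bool" where
  "test_fun \<phi> \<longleftrightarrow> (\<forall>k x. ((deriv ^^ k) \<phi>) differentiable (at x)) \<and>
     (\<exists>R. \<forall>x. \<bar>x\<bar> > R \<longrightarrow> \<phi> x = 0)"

definition weak_derivs :: "nat \<Rightarrow> (real \<Rightarrow> real) \<Rightarrow> (nat \<Rightarrow> real \<Rightarrow> real) \<Rightarrow> bool" where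
  "weak_derivs \<alpha> f g \<longleftrightarrow> g 0 = f \<and> (\<forall>\<tau>\<le>\<alpha>. L2rho (g \<tau>)) \<and>
     (\<forall>\<tau>. 1 \<le> \<tau> \<and> \<tau> \<le> \<alpha> \<longrightarrow> (\<forall>\<phi>. test_fun \<phi> \<longrightarrow>
        integral\<^sup>L lborel (\<lambda>x. f x * (deriv ^^ \<tau>) \<phi> x)
          = (-1) ^ \<tau> * integral\<^sup>L lborel (\<lambda>x. g \<tau> x * \<phi> x)))"

text \<open>Weighted Sobolev space, elements given by their continuous representatives.\<close>
definition Hspace :: "nat \<Rightarrow> (real \<Rightarrow> real) set" where
  "Hspace \<alpha> = {f. continuous_on UNIV f \<and> (\<exists>g. weak_derivs \<alpha> f g)}"

definition Hnorm :: "nat \<Rightarrow> (real \<Rightarrow> real) \<Rightarrow> real" where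
  "Hnorm \<alpha> f = (let g = (SOME g. weak_derivs \<alpha> f g) in
     sqrt (\<Sum>\<tau>\<le>\<alpha>. integral\<^sup>L lborel (\<lambda>x. (g \<tau> x)\<^sup>2 * gauss_rho x)))"

definition gauss_int :: "(real \<Rightarrow> real) \<Rightarrow> real" where
  "gauss_int f = integral\<^sup>L lborel (\<lambda>x. f x * gauss_rho x)"

definition quad :: "nat \<Rightarrow> (nat \<Rightarrow> real) \<Rightarrow> (nat \<Rightarrow> real) \<Rightarrow> (real \<Rightarrow> real) \<Rightarrow> real" where
  "quad n \<xi> w f = (\<Sum>j=1..n. w j * f (\<xi> j))"

definition wce :: "nat \<Rightarrow> nat \<Rightarrow> (nat \<Rightarrow> real) \<Rightarrow> (nat \<Rightarrow> real) \<Rightarrow> ereal" where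
  "wce \<alpha> n \<xi> w = (SUP f \<in> {f \<in> Hspace \<alpha>. f \<noteq> (\<lambda>_. 0)}.
       ereal (\<bar>gauss_int f - quad n \<xi> w f\<bar> / Hnorm \<alpha> f))"

definition ind_nonneg :: "real \<Rightarrow> real" where
  "ind_nonneg x = (if x \<ge> 0 then 1 else 0)"

end

theory Submission
  imports Defs "HOL-Computational_Algebra.Polynomial"
begin

(* Let h be the smallest gap between consecutive nodes. Put a rescaled copy B((x - xi_j)/h) of a
   fixed smooth bump B, supported in [1/3, 2/3], into every gap [xi_j, xi_(j+1)] and let f be the
   sum of these bumps. Then f vanishes at all nodes, so the error of Q_n on f is I(f), which is at
   least a multiple of h times the sum over the gaps of the minimum of rho on the gap. The bumps
   have disjoint supports, so the square of each derivative of f is the sum of the squares of the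
   derivatives of the bumps; the tau-th derivative of a bump is of size h^(-tau) on an interval of
   length h, so ||f||_alpha^2 is at most a multiple of h^(1 - 2 sigma) times the sum over the gaps
   of the maximum of rho on the gap. Because the norm is defined through some choice of weak
   derivatives, one also needs their uniqueness almost everywhere (the fundamental lemma of the
   calculus of variations) to compute ||f||_alpha from the classical derivatives of f. *)

section \<open>Smooth functions\<close>

primrec differentiable_times :: "nat \<Rightarrow> (real \<Rightarrow> real) \<Rightarrow> bool" where
  "differentiable_times 0 f \<longleftrightarrow> True"
| "differentiable_times (Suc k) f \<longleftrightarrow>
     (\<forall>x. f differentiable (at x)) \<and> differentiable_times k (deriv f)"

definition smooth :: "(real \<Rightarrow> real) \<Rightarrow> bool" where
  "smooth f \<longleftrightarrow> (\<forall>k. differentiable_times k f)"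

lemmas real_differentiable_imp_DERIV = DERIV_deriv_iff_real_differentiable[THEN iffD2]

lemma deriv_fun_eqI: "(\<And>x. (f has_real_derivative f' x) (at x)) \<Longrightarrow> deriv f = f'"
  by (rule ext) (simp add: DERIV_imp_deriv)

lemma differentiable_times_SucD: "differentiable_times (Suc k) f \<Longrightarrow> differentiable_times k f"
  by (induction k arbitrary: f) auto

lemma differentiable_times_const: "differentiable_times k (\<lambda>x. c)"
proof (induction k arbitrary: c)
  case (Suc k)
  have "deriv (\<lambda>x. c) = (\<lambda>x. 0)" by (rule deriv_fun_eqI) auto
  then show ?case using Suc by auto
qed simp

lemma differentiable_times_add:
  "differentiable_times k f \<Longrightarrow> differentiable_times k g \<Longrightarrow> differentiable_times k (\<lambda>x. f x + g x)"
proof (induction k arbitrary: f g)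
  case (Suc k)
  have "deriv (\<lambda>x. f x + g x) = (\<lambda>x. deriv f x + deriv g x)"
    using Suc.prems
    by (intro deriv_fun_eqI) (auto intro!: derivative_eq_intros real_differentiable_imp_DERIV)
  then show ?case using Suc by auto
qed simp

lemma differentiable_times_mult:
  "differentiable_times k f \<Longrightarrow> differentiable_times k g \<Longrightarrow> differentiable_times k (\<lambda>x. f x * g x)"
proof (induction k arbitrary: f g)
  case (Suc k)
  have "deriv (\<lambda>x. f x * g x) = (\<lambda>x. deriv f x * g x + f x * deriv g x)"
    using Suc.prems
    by (intro deriv_fun_eqI) (auto intro!: derivative_eq_intros real_differentiable_imp_DERIV)
  moreover have "differentiable_times k (\<lambda>x. deriv f x * g x + f x * deriv g x)"
    using Suc differentiable_times_SucD[OF Suc.prems(1)] differentiable_times_SucD[OF Suc.prems(2)]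
    by (intro differentiable_times_add Suc.IH) auto
  ultimately show ?case using Suc by auto
qed simp

lemma differentiable_times_affine:
  "differentiable_times k f \<Longrightarrow> differentiable_times k (\<lambda>x. f (a * x + c))"
proof (induction k arbitrary: f)
  case (Suc k)
  have D: "((\<lambda>x. f (a * x + c)) has_real_derivative a * deriv f (a * x + c)) (at x)" for x
  proof -
    have "((\<lambda>x. a * x + c) has_real_derivative a) (at x)"
      by (auto intro!: derivative_eq_intros)
    from DERIV_chain2[OF real_differentiable_imp_DERIV this] Suc.prems
    show ?thesis by (simp add: mult.commute)
  qed
  then have "deriv (\<lambda>x. f (a * x + c)) = (\<lambda>x. a * deriv f (a * x + c))"
    by (rule deriv_fun_eqI)
  moreover have "\<forall>x. (\<lambda>x. f (a * x + c)) differentiable (at x)"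
    using D real_differentiable_def by blast
  ultimately show ?case
    using Suc by (auto intro!: differentiable_times_mult[OF differentiable_times_const])
qed simp

lemma differentiable_times_inverse:
  "(\<And>x. f x \<noteq> 0) \<Longrightarrow> differentiable_times k f \<Longrightarrow> differentiable_times k (\<lambda>x. inverse (f x))"
proof (induction k arbitrary: f)
  case (Suc k)
  have "deriv (\<lambda>x. inverse (f x)) = (\<lambda>x. - deriv f x * (inverse (f x) * inverse (f x)))"
    using Suc.prems
    by (intro deriv_fun_eqI) (auto intro!: derivative_eq_intros
        DERIV_chain2[OF real_differentiable_imp_DERIV] simp: power2_eq_square)
  moreover have "differentiable_times k (\<lambda>x. - deriv f x * (inverse (f x) * inverse (f x)))"
  proof -
    have "differentiable_times k (\<lambda>x. (- 1) * deriv f x)"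
      using Suc.prems by (intro differentiable_times_mult differentiable_times_const) auto
    then have h1: "differentiable_times k (\<lambda>x. - deriv f x)" by simp
    have h2: "differentiable_times k (\<lambda>x. inverse (f x))"
      using Suc.IH Suc.prems differentiable_times_SucD by blast
    show ?thesis by (rule differentiable_times_mult[OF h1 differentiable_times_mult[OF h2 h2]])
  qed
  moreover have "\<forall>x. (\<lambda>x. inverse (f x)) differentiable (at x)"
    using Suc.prems by (auto intro!: derivative_eq_intros)
  ultimately show ?case using Suc by auto
qed simp

lemma smooth_add: "smooth f \<Longrightarrow> smooth g \<Longrightarrow> smooth (\<lambda>x. f x + g x)"
  by (simp add: smooth_def differentiable_times_add)

lemma smooth_mult: "smooth f \<Longrightarrow> smooth g \<Longrightarrow> smooth (\<lambda>x. f x * g x)"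
  by (simp add: smooth_def differentiable_times_mult)

lemma smooth_affine: "smooth f \<Longrightarrow> smooth (\<lambda>x. f (a * x + c))"
  by (simp add: smooth_def differentiable_times_affine)

lemma smooth_inverse: "(\<And>x. f x \<noteq> 0) \<Longrightarrow> smooth f \<Longrightarrow> smooth (\<lambda>x. inverse (f x))"
  by (simp add: smooth_def differentiable_times_inverse)

lemma smooth_sum: "finite A \<Longrightarrow> (\<And>j. j \<in> A \<Longrightarrow> smooth (f j)) \<Longrightarrow> smooth (\<lambda>x. \<Sum>j\<in>A. f j x)"
  by (induction A rule: finite_induct)
     (auto simp: smooth_def intro: differentiable_times_const differentiable_times_add)

lemma smooth_differentiable: "smooth f \<Longrightarrow> f differentiable (at x)"
  unfolding smooth_def by (metis differentiable_times.simps(2))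

lemma smooth_deriv: "smooth f \<Longrightarrow> smooth (deriv f)"
  unfolding smooth_def by (metis differentiable_times.simps(2))

lemma smooth_deriv_funpow: "smooth f \<Longrightarrow> smooth ((deriv ^^ k) f)"
  by (induction k) (auto intro: smooth_deriv)

lemma smooth_DERIV: "smooth f \<Longrightarrow> ((deriv ^^ k) f has_real_derivative (deriv ^^ Suc k) f x) (at x)"
  using real_differentiable_imp_DERIV[OF smooth_differentiable[OF smooth_deriv_funpow]] by simp

lemma smooth_continuous_on: "smooth f \<Longrightarrow> continuous_on UNIV f"
  by (meson continuous_at_imp_continuous_on differentiable_imp_continuous_within smooth_differentiable)

lemma smooth_imp_test_fun: "smooth \<phi> \<Longrightarrow> \<forall>x. \<bar>x\<bar> > R \<longrightarrow> \<phi> x = 0 \<Longrightarrow> test_fun \<phi>"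
  unfolding test_fun_def using smooth_differentiable smooth_deriv_funpow by blast

lemma test_fun_DERIV:
  "test_fun \<phi> \<Longrightarrow> ((deriv ^^ k) \<phi> has_real_derivative (deriv ^^ Suc k) \<phi> x) (at x)"
  unfolding test_fun_def using real_differentiable_imp_DERIV by simp

lemma test_fun_continuous_on: "test_fun \<phi> \<Longrightarrow> continuous_on UNIV ((deriv ^^ k) \<phi>)"
  unfolding test_fun_def
  by (meson continuous_at_imp_continuous_on differentiable_imp_continuous_within)

lemma deriv_vanishes_outside:
  fixes g :: "real \<Rightarrow> real"
  assumes "\<forall>x. g differentiable (at x)" "\<forall>x. x < a \<or> x > b \<longrightarrow> g x = 0"
  shows "\<forall>x. x < a \<or> x > b \<longrightarrow> deriv g x = 0"
proof (intro allI impI)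
  fix x :: real assume x: "x < a \<or> x > b"
  have "((\<lambda>x. 0) has_real_derivative 0) (at x)" by simp
  then have "(g has_real_derivative 0) (at x)"
    by (rule has_field_derivative_transform_within_open[where S="{..<a} \<union> {b<..}"])
       (use x assms in auto)
  then show "deriv g x = 0" by (simp add: DERIV_imp_deriv)
qed

lemma deriv_funpow_vanishes_outside:
  assumes "smooth g" "\<forall>x. x < a \<or> x > b \<longrightarrow> g x = 0"
  shows "\<forall>x. x < a \<or> x > b \<longrightarrow> (deriv ^^ k) g x = 0"
proof (induction k)
  case (Suc k)
  then show ?case
    using deriv_vanishes_outside[of "(deriv ^^ k) g" a b]
      smooth_differentiable[OF smooth_deriv_funpow[OF assms(1)]] by simp
qed (use assms in simp)

lemma deriv_funpow_sum:
  assumes "finite J" "\<And>j. j \<in> J \<Longrightarrow> smooth (f j)"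
  shows "(deriv ^^ k) (\<lambda>x. \<Sum>j\<in>J. f j x) = (\<lambda>x. \<Sum>j\<in>J. (deriv ^^ k) (f j) x)"
proof (induction k)
  case (Suc k)
  have "deriv (\<lambda>x. \<Sum>j\<in>J. (deriv ^^ k) (f j) x) = (\<lambda>x. \<Sum>j\<in>J. (deriv ^^ Suc k) (f j) x)"
    using assms by (intro deriv_fun_eqI DERIV_sum smooth_DERIV)
  then show ?case using Suc by simp
qed simp

lemma deriv_funpow_rescale:
  assumes "smooth g"
  shows "(deriv ^^ k) (\<lambda>x. g ((x - c) / h)) = (\<lambda>x. (1/h) ^ k * (deriv ^^ k) g ((x - c) / h))"
proof (induction k)
  case (Suc k)
  have "((\<lambda>x. (1/h) ^ k * (deriv ^^ k) g ((x - c) / h)) has_real_derivative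
          (1/h) ^ Suc k * (deriv ^^ Suc k) g ((x - c) / h)) (at x)" for x
  proof -
    have "((\<lambda>x. (x - c) / h) has_real_derivative 1/h) (at x)"
      using DERIV_cdivide[OF DERIV_diff[OF DERIV_ident DERIV_const]] by simp
    from DERIV_cmult[OF DERIV_chain2[OF smooth_DERIV[OF assms] this], of "(1/h) ^ k"]
    show ?thesis by (simp add: mult_ac)
  qed
  then show ?case using Suc by (simp add: deriv_fun_eqI)
qed simp

section \<open>Flat functions, smooth steps and bumps\<close>

(* All derivatives of exp(-1/x), extended by 0 to x <= 0, have this form. *)
definition flat_fun :: "real poly \<Rightarrow> real \<Rightarrow> real" where
  "flat_fun P x = (if x > 0 then poly P (1/x) * exp (- (1/x)) else 0)"

definition flat_fun_deriv_poly :: "real poly \<Rightarrow> real poly" where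
  "flat_fun_deriv_poly P = [:0, 0, 1:] * (P - pderiv P)"

lemma poly_times_exp_neg_tendsto_0:
  fixes P :: "real poly"
  shows "((\<lambda>y. poly P y * exp (- y)) \<longlongrightarrow> 0) at_top"
proof -
  have "((\<lambda>y. \<Sum>i\<le>degree P. coeff P i * (y ^ i / exp y)) \<longlongrightarrow> (\<Sum>i\<le>degree P. coeff P i * 0)) at_top"
    by (intro tendsto_sum tendsto_mult tendsto_const tendsto_power_div_exp_0)
  moreover have "poly P y * exp (- y) = (\<Sum>i\<le>degree P. coeff P i * (y ^ i / exp y))" for y
    by (simp add: poly_altdef sum_distrib_right exp_minus divide_inverse mult.assoc)
  ultimately show ?thesis by simp
qed

lemma flat_fun_has_derivative_pos:
  assumes "x > 0"
  shows "(flat_fun P has_real_derivative flat_fun (flat_fun_deriv_poly P) x) (at x)"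
proof -
  have "((\<lambda>x. poly P (1/x) * exp (- (1/x))) has_real_derivative
          poly (pderiv P) (1/x) * (- 1 / x\<^sup>2) * exp (- (1/x)) + poly P (1/x) * (exp (- (1/x)) * (1/x\<^sup>2))) (at x)"
    using assms
    by (auto intro!: derivative_eq_intros DERIV_chain2[OF poly_DERIV] simp: power2_eq_square)
  moreover have "poly (pderiv P) (1/x) * (- 1 / x\<^sup>2) * exp (- (1/x)) + poly P (1/x) * (exp (- (1/x)) * (1/x\<^sup>2))
      = flat_fun (flat_fun_deriv_poly P) x"
    using assms by (simp add: flat_fun_def flat_fun_deriv_poly_def algebra_simps power2_eq_square)
  ultimately have "((\<lambda>x. poly P (1/x) * exp (- (1/x))) has_real_derivative
      flat_fun (flat_fun_deriv_poly P) x) (at x)"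
    by simp
  then show ?thesis
    by (rule has_field_derivative_transform_within_open[where S="{0<..}"])
       (use assms in \<open>auto simp: flat_fun_def\<close>)
qed

lemma flat_fun_has_derivative_neg:
  assumes "x < 0"
  shows "(flat_fun P has_real_derivative flat_fun (flat_fun_deriv_poly P) x) (at x)"
proof -
  have "((\<lambda>x. 0) has_real_derivative 0) (at x)" by simp
  then have "(flat_fun P has_real_derivative 0) (at x)"
    by (rule has_field_derivative_transform_within_open[where S="{..<0}"])
       (use assms in \<open>auto simp: flat_fun_def\<close>)
  then show ?thesis using assms by (simp add: flat_fun_def)
qed

lemma flat_fun_has_derivative_0:
  "(flat_fun P has_real_derivative flat_fun (flat_fun_deriv_poly P) 0) (at 0)"
proof -
  have "((\<lambda>y. (flat_fun P y - flat_fun P 0) / (y - 0)) \<longlongrightarrow> 0) (at 0)"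
  proof (rule filterlim_split_at)
    have "eventually (\<lambda>y. 0 = (flat_fun P y - flat_fun P 0) / (y - 0)) (at_left (0::real))"
      using eventually_at_left_real[of "-1" 0] by (auto elim!: eventually_mono simp: flat_fun_def)
    then show "((\<lambda>y. (flat_fun P y - flat_fun P 0) / (y - 0)) \<longlongrightarrow> 0) (at_left 0)"
      by (rule Lim_transform_eventually[OF tendsto_const])
  next
    have lim: "((\<lambda>y. poly (pCons 0 P) (inverse y) * exp (- inverse y)) \<longlongrightarrow> 0) (at_right 0)"
      using filterlim_compose[OF poly_times_exp_neg_tendsto_0[of "pCons 0 P"]
          filterlim_inverse_at_top_right] .
    have "eventually (\<lambda>y. poly (pCons 0 P) (inverse y) * exp (- inverse y)
        = (flat_fun P y - flat_fun P 0) / (y - 0)) (at_right (0::real))"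
      using eventually_at_right_real[of 0 1]
      by (auto elim!: eventually_mono simp: flat_fun_def field_simps)
    then show "((\<lambda>y. (flat_fun P y - flat_fun P 0) / (y - 0)) \<longlongrightarrow> 0) (at_right 0)"
      by (rule Lim_transform_eventually[OF lim])
  qed
  then show ?thesis
    by (simp add: has_field_derivative_iff flat_fun_def)
qed

lemma flat_fun_has_derivative:
  "(flat_fun P has_real_derivative flat_fun (flat_fun_deriv_poly P) x) (at x)"
  using flat_fun_has_derivative_0 flat_fun_has_derivative_pos flat_fun_has_derivative_neg
  by (cases "x = 0") (auto simp: neq_iff)

lemma smooth_flat_fun: "smooth (flat_fun P)"
proof -
  have "differentiable_times k (flat_fun P)" for k
  proof (induction k arbitrary: P)
    case (Suc k)
    have "deriv (flat_fun P) = flat_fun (flat_fun_deriv_poly P)"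
      by (rule deriv_fun_eqI[OF flat_fun_has_derivative])
    moreover have "\<forall>x. flat_fun P differentiable (at x)"
      using flat_fun_has_derivative real_differentiable_def by blast
    ultimately show ?case using Suc by simp
  qed simp
  then show ?thesis by (simp add: smooth_def)
qed

definition flat_exp :: "real \<Rightarrow> real" where
  "flat_exp x = (if x > 0 then exp (- (1/x)) else 0)"

lemma smooth_flat_exp: "smooth flat_exp"
proof -
  have "flat_exp = flat_fun 1" by (auto simp: flat_exp_def flat_fun_def)
  then show ?thesis using smooth_flat_fun by metis
qed

lemma flat_exp_nonneg: "flat_exp x \<ge> 0"
  by (simp add: flat_exp_def)

lemma flat_exp_pos: "x > 0 \<Longrightarrow> flat_exp x > 0"
  by (simp add: flat_exp_def)

lemma flat_exp_eq_0: "x \<le> 0 \<Longrightarrow> flat_exp x = 0"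
  by (simp add: flat_exp_def)

lemma flat_exp_ge: "x \<ge> 1/5 \<Longrightarrow> flat_exp x \<ge> exp (-5)"
proof -
  assume x: "x \<ge> 1/5"
  then have "1 / x \<le> 5" by (simp add: divide_le_eq)
  then show ?thesis using x by (simp add: flat_exp_def)
qed

definition smooth_step :: "real \<Rightarrow> real" where
  "smooth_step t = flat_exp t / (flat_exp t + flat_exp (1 - t))"

lemma flat_exp_step_denom_pos: "flat_exp t + flat_exp (1 - t) > 0"
  using flat_exp_pos[of t] flat_exp_pos[of "1 - t"] flat_exp_nonneg[of t] flat_exp_nonneg[of "1 - t"]
  by (cases "t > 0") auto

lemma smooth_smooth_step: "smooth smooth_step"
proof -
  have "smooth (\<lambda>t. flat_exp t + flat_exp ((-1) * t + 1))"
    by (intro smooth_add smooth_affine smooth_flat_exp)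
  then have "smooth (\<lambda>t. inverse (flat_exp t + flat_exp (1 - t)))"
    using flat_exp_step_denom_pos
    by (intro smooth_inverse) (auto simp: less_imp_neq[symmetric])
  then show ?thesis
    unfolding smooth_step_def[abs_def] divide_inverse by (rule smooth_mult[OF smooth_flat_exp])
qed

lemma smooth_step_eq_0: "t \<le> 0 \<Longrightarrow> smooth_step t = 0"
  by (simp add: smooth_step_def flat_exp_eq_0)

lemma smooth_step_eq_1: "t \<ge> 1 \<Longrightarrow> smooth_step t = 1"
  using flat_exp_pos[of t] by (simp add: smooth_step_def flat_exp_eq_0)

lemma smooth_step_bounds: "0 \<le> smooth_step t" "smooth_step t \<le> 1"
  using flat_exp_step_denom_pos[of t] flat_exp_nonneg[of t] flat_exp_nonneg[of "1 - t"]
  by (auto simp: smooth_step_def divide_le_eq)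

(* Equal to 1 on [a, b] and to 0 outside [a - 1/(k+1), b + 1/(k+1)]. *)
definition indicator_approx :: "real \<Rightarrow> real \<Rightarrow> nat \<Rightarrow> real \<Rightarrow> real" where
  "indicator_approx a b k x =
     smooth_step (real (Suc k) * (x - a) + 1) * smooth_step (real (Suc k) * (b - x) + 1)"

lemma smooth_indicator_approx: "smooth (indicator_approx a b k)"
proof -
  have "smooth (\<lambda>x. smooth_step (real (Suc k) * x + (1 - real (Suc k) * a)) *
      smooth_step ((- real (Suc k)) * x + (real (Suc k) * b + 1)))"
    by (intro smooth_mult smooth_affine smooth_smooth_step)
  then show ?thesis unfolding indicator_approx_def[abs_def] by (simp add: algebra_simps)
qed

lemma indicator_approx_bound: "\<bar>indicator_approx a b k x\<bar> \<le> 1"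
  using smooth_step_bounds[of "real (Suc k) * (x - a) + 1"]
    smooth_step_bounds[of "real (Suc k) * (b - x) + 1"]
  unfolding indicator_approx_def by (simp add: abs_mult mult_le_one)

lemma indicator_approx_eq_0:
  assumes "1 < real (Suc k) * (a - x) \<or> 1 < real (Suc k) * (x - b)"
  shows "indicator_approx a b k x = 0"
  using assms by (auto simp: indicator_approx_def smooth_step_eq_0 algebra_simps)

lemma indicator_approx_eq_0_outside:
  assumes "x < a - 1 \<or> x > b + 1"
  shows "indicator_approx a b k x = 0"
proof (rule indicator_approx_eq_0)
  show "1 < real (Suc k) * (a - x) \<or> 1 < real (Suc k) * (x - b)"
    using assms
  proof
    assume x: "x < a - 1"
    have "1 < 1 * (a - x)" using x by simp
    also have "\<dots> \<le> real (Suc k) * (a - x)" using x by (intro mult_right_mono) auto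
    finally show ?thesis by blast
  next
    assume x: "x > b + 1"
    have "1 < 1 * (x - b)" using x by simp
    also have "\<dots> \<le> real (Suc k) * (x - b)" using x by (intro mult_right_mono) auto
    finally show ?thesis by blast
  qed
qed

lemma test_fun_indicator_approx: "test_fun (indicator_approx a b k)"
  by (rule smooth_imp_test_fun[OF smooth_indicator_approx, where R="\<bar>a\<bar> + \<bar>b\<bar> + 1"])
     (auto intro!: indicator_approx_eq_0_outside)

lemma indicator_approx_tendsto: "(\<lambda>k. indicator_approx a b k x) \<longlonglongrightarrow> indicator {a..b} x"
proof (cases "x \<in> {a..b}")
  case True
  then have "indicator_approx a b k x = 1" for k
    by (simp add: indicator_approx_def smooth_step_eq_1 del: of_nat_Suc)
  then show ?thesis using True by simp
next
  case False
  then have pos: "max (a - x) (x - b) > 0" by auto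
  obtain N :: nat where N: "1 / max (a - x) (x - b) < real N" using reals_Archimedean2 by blast
  have "indicator_approx a b k x = 0" if "N \<le> k" for k
  proof (rule indicator_approx_eq_0)
    have "1 / max (a - x) (x - b) < real (Suc k)" using N that by linarith
    then have "1 < real (Suc k) * max (a - x) (x - b)" using pos by (simp add: field_simps)
    then show "1 < real (Suc k) * (a - x) \<or> 1 < real (Suc k) * (x - b)"
      by (cases "a - x \<ge> x - b") (simp_all add: max_absorb1 max_absorb2 del: of_nat_Suc)
  qed
  then have "eventually (\<lambda>k. indicator_approx a b k x = 0) sequentially"
    by (auto simp: eventually_sequentially)
  then show ?thesis using False by (simp add: tendsto_eventually)
qed

definition bump :: "real \<Rightarrow> real" where
  "bump t = flat_exp (3 * t - 1) * flat_exp (2 - 3 * t)"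

lemma smooth_bump: "smooth bump"
proof -
  have "smooth (\<lambda>t. flat_exp (3 * t + (-1)) * flat_exp ((-3) * t + 2))"
    by (intro smooth_mult smooth_affine smooth_flat_exp)
  then show ?thesis unfolding bump_def[abs_def] by simp
qed

lemma bump_nonneg: "bump t \<ge> 0"
  by (simp add: bump_def flat_exp_nonneg)

lemma bump_eq_0: "t < 1/3 \<or> t > 2/3 \<Longrightarrow> bump t = 0"
  by (auto simp: bump_def flat_exp_eq_0)

lemma deriv_funpow_bump_eq_0: "t < 1/3 \<or> t > 2/3 \<Longrightarrow> (deriv ^^ k) bump t = 0"
  using deriv_funpow_vanishes_outside[OF smooth_bump, of "1/3" "2/3" k] bump_eq_0 by blast

lemma bump_ge: "t \<in> {2/5..3/5} \<Longrightarrow> bump t \<ge> exp (-10)"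
proof -
  assume t: "t \<in> {2/5..3/5}"
  have "exp (-5) * exp (-5) \<le> bump t"
    unfolding bump_def using t by (intro mult_mono flat_exp_ge) (auto simp: flat_exp_nonneg)
  then show ?thesis by (simp add: exp_add[symmetric])
qed

section \<open>Gaussian-weighted integrals and weak derivatives\<close>

lemma gauss_rho_pos: "gauss_rho x > 0"
  by (simp add: gauss_rho_def)

lemma continuous_on_gauss_rho: "continuous_on UNIV gauss_rho"
  unfolding gauss_rho_def by (intro continuous_intros) auto

lemma gauss_rho_ge_on_interval:
  assumes "a \<le> x" "x \<le> b"
  shows "exp (- max (a\<^sup>2) (b\<^sup>2) / 2) / sqrt (2 * pi) \<le> gauss_rho x"
proof -
  have "x\<^sup>2 \<le> max (a\<^sup>2) (b\<^sup>2)"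
  proof (cases "x \<ge> 0")
    case True
    then have "x\<^sup>2 \<le> b\<^sup>2" using assms by (intro power_mono) auto
    then show ?thesis by simp
  next
    case False
    then have "(-x)\<^sup>2 \<le> (-a)\<^sup>2" using assms by (intro power_mono) auto
    then show ?thesis by simp
  qed
  then show ?thesis unfolding gauss_rho_def by (intro divide_right_mono) auto
qed

lemma gauss_rho_le_on_interval:
  assumes "a \<le> x" "x \<le> b"
  shows "gauss_rho x \<le> exp (- (ind_nonneg (a * b) * min (a\<^sup>2) (b\<^sup>2)) / 2) / sqrt (2 * pi)"
proof -
  have "min (a\<^sup>2) (b\<^sup>2) \<le> x\<^sup>2" if "a * b \<ge> 0"
  proof (cases "a \<ge> 0")
    case True
    then have "a\<^sup>2 \<le> x\<^sup>2" using assms by (intro power_mono) auto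
    then show ?thesis by simp
  next
    case False
    with that have "b \<le> 0" by (simp add: zero_le_mult_iff)
    then have "(-b)\<^sup>2 \<le> (-x)\<^sup>2" using assms by (intro power_mono) auto
    then show ?thesis by simp
  qed
  then have "ind_nonneg (a * b) * min (a\<^sup>2) (b\<^sup>2) \<le> x\<^sup>2"
    by (simp add: ind_nonneg_def)
  then show ?thesis unfolding gauss_rho_def by (intro divide_right_mono) auto
qed

lemma integrable_continuous_vanishing_outside:
  fixes w :: "real \<Rightarrow> real"
  assumes "continuous_on UNIV w" "\<forall>x. x < c \<or> x > d \<longrightarrow> w x = 0"
  shows "integrable lborel w"
proof -
  have "w = (\<lambda>x. indicator {c..d} x *\<^sub>R w x)"
    proof
    fix x show "w x = indicator {c..d} x *\<^sub>R w x"
      using assms(2) by (cases "x \<in> {c..d}") (auto simp: not_le)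
  qed
  moreover have "integrable lborel (\<lambda>x. indicator {c..d} x *\<^sub>R w x)"
    by (rule borel_integrable_compact) (auto intro: continuous_on_subset[OF assms(1)])
  ultimately show ?thesis by simp
qed

lemma integral_continuous_vanishing_outside:
  fixes w :: "real \<Rightarrow> real"
  assumes "continuous_on UNIV w" "\<forall>x. x < c \<or> x > d \<longrightarrow> w x = 0"
  shows "integral\<^sup>L lborel w = integral {c..d} w"
proof -
  have eq: "w = (\<lambda>x. indicator {c..d} x *\<^sub>R w x)"
    proof
    fix x show "w x = indicator {c..d} x *\<^sub>R w x"
      using assms(2) by (cases "x \<in> {c..d}") (auto simp: not_le)
  qed
  have "integral\<^sup>L lborel w = (LINT x : {c..d} | lborel. w x)"
    by (subst eq) (simp add: set_lebesgue_integral_def)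
  also have "\<dots> = integral {c..d} w"
    using integrable_continuous_vanishing_outside[OF assms] eq
    by (intro set_borel_integral_eq_integral) (simp add: set_integrable_def)
  finally show ?thesis .
qed

lemma integration_by_parts_lborel:
  assumes u: "\<And>x. (u has_real_derivative u' x) (at x)" "continuous_on UNIV u'"
    and v: "\<And>x. (v has_real_derivative v' x) (at x)" "continuous_on UNIV v'"
    and vanish: "\<forall>x. x < a \<or> x > b \<longrightarrow> u x = 0 \<and> u' x = 0"
  shows "integral\<^sup>L lborel (\<lambda>x. u x * v' x) = - integral\<^sup>L lborel (\<lambda>x. u' x * v x)"
proof -
  have cont: "continuous_on UNIV u" "continuous_on UNIV v"
    by (meson DERIV_isCont continuous_at_imp_continuous_on u(1) v(1))+
  define c where "c = min a b - 1"
  define d where "d = max a b + 1"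
  have "c \<le> d" "u c = 0" "u d = 0" using vanish unfolding c_def d_def by auto
  have "((\<lambda>x. u' x * v x + u x * v' x) has_integral (u d * v d - u c * v c)) {c..d}"
  proof (rule fundamental_theorem_of_calculus[OF \<open>c \<le> d\<close>])
    fix x
    have "((\<lambda>x. u x * v x) has_real_derivative u' x * v x + u x * v' x) (at x)"
      using u v by (auto intro!: derivative_eq_intros)
    then show "((\<lambda>x. u x * v x) has_vector_derivative u' x * v x + u x * v' x) (at x within {c..d})"
      using has_vector_derivative_at_within has_real_derivative_iff_has_vector_derivative by blast
  qed
  then have sum0: "integral {c..d} (\<lambda>x. u' x * v x + u x * v' x) = 0"
    using \<open>u c = 0\<close> \<open>u d = 0\<close> by (simp add: integral_unique)
  have c1: "continuous_on UNIV (\<lambda>x. u x * v' x)" "continuous_on UNIV (\<lambda>x. u' x * v x)"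
    using cont u v by (auto intro!: continuous_intros)
  have z1: "\<forall>x. x < c \<or> x > d \<longrightarrow> u x * v' x = 0" "\<forall>x. x < c \<or> x > d \<longrightarrow> u' x * v x = 0"
    using vanish unfolding c_def d_def by auto
  have "integral {c..d} (\<lambda>x. u' x * v x + u x * v' x)
      = integral {c..d} (\<lambda>x. u' x * v x) + integral {c..d} (\<lambda>x. u x * v' x)"
    by (intro integral_add integrable_continuous_interval continuous_on_subset[OF c1(1)]
        continuous_on_subset[OF c1(2)]) auto
  then show ?thesis
    using sum0 integral_continuous_vanishing_outside[OF c1(1) z1(1)]
      integral_continuous_vanishing_outside[OF c1(2) z1(2)] by simp
qed

lemma integral_mult_deriv_funpow_test_fun:
  assumes f: "smooth f" "\<forall>x. x < a \<or> x > b \<longrightarrow> f x = 0" and \<phi>: "test_fun \<phi>"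
  shows "integral\<^sup>L lborel (\<lambda>x. f x * (deriv ^^ \<tau>) \<phi> x)
     = (-1) ^ \<tau> * integral\<^sup>L lborel (\<lambda>x. (deriv ^^ \<tau>) f x * \<phi> x)"
proof -
  have "integral\<^sup>L lborel (\<lambda>x. f x * (deriv ^^ \<tau>) \<phi> x)
     = (-1) ^ k * integral\<^sup>L lborel (\<lambda>x. (deriv ^^ k) f x * (deriv ^^ (\<tau> - k)) \<phi> x)"
    if "k \<le> \<tau>" for k
    using that
  proof (induction k)
    case (Suc k)
    then obtain m where m: "\<tau> - k = Suc m" "\<tau> - Suc k = m"
      by (metis Suc_diff_Suc Suc_le_lessD diff_Suc_1)
    have "integral\<^sup>L lborel (\<lambda>x. (deriv ^^ k) f x * (deriv ^^ Suc m) \<phi> x)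
        = - integral\<^sup>L lborel (\<lambda>x. (deriv ^^ Suc k) f x * (deriv ^^ m) \<phi> x)"
      using deriv_funpow_vanishes_outside[OF f]
      by (intro integration_by_parts_lborel smooth_DERIV f(1) test_fun_DERIV \<phi>
          smooth_continuous_on smooth_deriv_funpow test_fun_continuous_on) blast+
    then show ?case using Suc m by simp
  qed simp
  from this[of \<tau>] show ?thesis by simp
qed

lemma weak_derivs_smooth:
  assumes f: "smooth f" "\<forall>x. x < a \<or> x > b \<longrightarrow> f x = 0"
  shows "weak_derivs \<alpha> f (\<lambda>\<tau>. (deriv ^^ \<tau>) f)"
proof -
  have "L2rho ((deriv ^^ \<tau>) f)" for \<tau>
    unfolding L2rho_def
  proof
    have c: "continuous_on UNIV ((deriv ^^ \<tau>) f)"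
      by (intro smooth_continuous_on smooth_deriv_funpow f(1))
    then show "(deriv ^^ \<tau>) f \<in> borel_measurable lborel"
      using borel_measurable_continuous_onI by simp
    show "integrable lborel (\<lambda>x. ((deriv ^^ \<tau>) f x)\<^sup>2 * gauss_rho x)"
      using c continuous_on_gauss_rho deriv_funpow_vanishes_outside[OF f]
      by (intro integrable_continuous_vanishing_outside[of _ a b]) (auto intro!: continuous_intros)
  qed
  then show ?thesis
    unfolding weak_derivs_def using integral_mult_deriv_funpow_test_fun[OF f] by simp
qed

lemma abs_mult_le_weighted_squares:
  fixes a b r :: real
  assumes "r > 0"
  shows "\<bar>a * b\<bar> \<le> a\<^sup>2 * r + b\<^sup>2 / r"
proof -
  have "\<bar>a * b\<bar> = (2 * (\<bar>a\<bar> * r) * \<bar>b\<bar>) / (2 * r)"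
    using assms by (simp add: abs_mult)
  also have "\<dots> \<le> ((\<bar>a\<bar> * r)\<^sup>2 + \<bar>b\<bar>\<^sup>2) / (2 * r)"
    using assms by (intro divide_right_mono sum_squares_bound) simp
  also have "\<dots> \<le> ((\<bar>a\<bar> * r)\<^sup>2 + \<bar>b\<bar>\<^sup>2) / r"
    using assms by (intro divide_left_mono) auto
  also have "\<dots> = a\<^sup>2 * r + b\<^sup>2 / r"
    using assms by (simp add: power_mult_distrib add_divide_distrib power2_eq_square)
  finally show ?thesis .
qed

lemma L2rho_integrable_mult_bounded_support:
  fixes g \<psi> :: "real \<Rightarrow> real"
  assumes g: "L2rho g" and \<psi>[measurable]: "\<psi> \<in> borel_measurable lborel"
    and bound: "\<And>x. \<bar>\<psi> x\<bar> \<le> M" and vanish: "\<And>x. x < c \<or> x > d \<Longrightarrow> \<psi> x = 0"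
  shows "integrable lborel (\<lambda>x. g x * \<psi> x)"
proof -
  have [measurable]: "g \<in> borel_measurable lborel"
    and gi: "integrable lborel (\<lambda>x. (g x)\<^sup>2 * gauss_rho x)"
    using g by (auto simp: L2rho_def)
  define r where "r = exp (- max (c\<^sup>2) (d\<^sup>2) / 2) / sqrt (2 * pi)"
  have "r > 0" by (simp add: r_def)
  let ?w = "\<lambda>x. (g x)\<^sup>2 * gauss_rho x + M\<^sup>2 / r * indicator {c..d} x"
  have "integrable lborel (indicator {c..d} :: real \<Rightarrow> real)"
    by (intro integrable_real_indicator) (auto simp: emeasure_lborel_Icc_eq)
  then have w: "integrable lborel ?w"
    using gi by (intro Bochner_Integration.integrable_add integrable_mult_right)
  have "(\<lambda>x. g x * \<psi> x) \<in> borel_measurable lborel"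
    by measurable
  moreover have "norm (g x * \<psi> x) \<le> norm (?w x)" for x
  proof -
    have "(\<psi> x)\<^sup>2 / gauss_rho x \<le> M\<^sup>2 / r * indicator {c..d} x"
    proof (cases "x \<in> {c..d}")
      case True
      have "(\<psi> x)\<^sup>2 \<le> M\<^sup>2"
        using bound[of x] by (metis abs_ge_zero order_trans power2_abs power_mono)
      moreover have "r \<le> gauss_rho x"
        unfolding r_def using True by (intro gauss_rho_ge_on_interval) auto
      ultimately have "(\<psi> x)\<^sup>2 / gauss_rho x \<le> M\<^sup>2 / r"
        using \<open>r > 0\<close> by (intro frac_le) auto
      then show ?thesis using True by simp
    next
      case False
      then have "\<psi> x = 0" by (intro vanish) auto
      then show ?thesis using False by simp
    qed
    moreover have "\<bar>g x * \<psi> x\<bar> \<le> (g x)\<^sup>2 * gauss_rho x + (\<psi> x)\<^sup>2 / gauss_rho x"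
      by (rule abs_mult_le_weighted_squares[OF gauss_rho_pos])
    ultimately have "\<bar>g x * \<psi> x\<bar> \<le> ?w x" by linarith
    then show ?thesis by simp
  qed
  ultimately show ?thesis
    by (intro Bochner_Integration.integrable_bound[OF w] AE_I2)
qed

lemma L2rho_integrable_mult_test_fun:
  assumes g: "L2rho g" and \<phi>: "test_fun \<phi>"
  shows "integrable lborel (\<lambda>x. g x * \<phi> x)"
proof -
  obtain R where R: "\<forall>x. \<bar>x\<bar> > R \<longrightarrow> \<phi> x = 0" using \<phi> unfolding test_fun_def by blast
  have c: "continuous_on UNIV \<phi>" using test_fun_continuous_on[OF \<phi>, of 0] by simp
  then have "compact (\<phi> ` {-R..R})"
    by (intro compact_continuous_image continuous_on_subset[OF c]) auto
  then obtain M where M: "\<forall>y\<in>\<phi> ` {-R..R}. \<bar>y\<bar> \<le> M"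
    using compact_imp_bounded bounded_real by blast
  have "\<bar>\<phi> x\<bar> \<le> \<bar>M\<bar>" for x
    using M R by (cases "x \<in> {-R..R}") force+
  moreover have "\<phi> \<in> borel_measurable lborel"
    using borel_measurable_continuous_onI[OF c] by simp
  ultimately show ?thesis
    using R by (intro L2rho_integrable_mult_bounded_support[OF g, of _ _ "-R" R]) auto
qed

lemma L2rho_integrable_mult_indicator:
  "L2rho g \<Longrightarrow> integrable lborel (\<lambda>x. g x * indicator {c..d} x)"
  by (rule L2rho_integrable_mult_bounded_support[of _ _ 1 c d]) (auto simp: indicator_def)

lemma integral_mult_indicator_eq_0_if_test_fun:
  fixes G :: "real \<Rightarrow> real"
  assumes G[measurable]: "G \<in> borel_measurable lborel"
    and local_int: "\<And>c d. integrable lborel (\<lambda>x. G x * indicator {c..d} x)"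
    and test: "\<And>\<phi>. test_fun \<phi> \<Longrightarrow> integral\<^sup>L lborel (\<lambda>x. G x * \<phi> x) = 0"
  shows "integral\<^sup>L lborel (\<lambda>x. G x * indicator {a..b} x) = 0"
proof -
  let ?w = "\<lambda>x. \<bar>G x * indicator {a-1..b+1} x\<bar>"
  have [measurable]: "indicator_approx a b k \<in> borel_measurable lborel" for k
    using borel_measurable_continuous_onI[OF smooth_continuous_on[OF smooth_indicator_approx]]
    by simp
  have "(\<lambda>k. integral\<^sup>L lborel (\<lambda>x. G x * indicator_approx a b k x)) \<longlonglongrightarrow>
      integral\<^sup>L lborel (\<lambda>x. G x * indicator {a..b} x)"
  proof (rule integral_dominated_convergence[where w="?w"])
    show "integrable lborel ?w" using local_int by (rule integrable_abs)
    show "AE x in lborel. (\<lambda>k. G x * indicator_approx a b k x) \<longlonglongrightarrow> G x * indicator {a..b} x"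
      by (intro AE_I2 tendsto_mult tendsto_const indicator_approx_tendsto)
    show "AE x in lborel. norm (G x * indicator_approx a b k x) \<le> ?w x" for k
    proof (intro AE_I2)
      fix x
      show "norm (G x * indicator_approx a b k x) \<le> ?w x"
      proof (cases "x \<in> {a-1..b+1}")
        case True
        then show ?thesis
          using indicator_approx_bound[of a b k x] by (simp add: abs_mult mult_left_le)
      qed (auto simp: indicator_approx_eq_0_outside)
    qed
  qed measurable
  moreover have "integral\<^sup>L lborel (\<lambda>x. G x * indicator_approx a b k x) = 0" for k
    by (rule test[OF test_fun_indicator_approx])
  ultimately show ?thesis by (simp add: LIMSEQ_const_iff)
qed

(* The Borel sets are generated by the intervals. *)
lemma integrable_AE_eq_0_if_interval_integrals_eq_0:
  fixes H :: "real \<Rightarrow> real"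
  assumes int: "integrable lborel H" and total: "integral\<^sup>L lborel H = 0"
    and interval_int: "\<And>a b. integral\<^sup>L lborel (\<lambda>x. H x * indicator {a..b} x) = 0"
  shows "AE x in lborel. H x = 0"
proof (rule sigma_finite_measure.density_zero[OF sigma_finite_lborel int])
  fix A :: "real set" assume "A \<in> sets lborel"
  then have "A \<in> sets borel" by simp
  then show "set_lebesgue_integral lborel A H = 0"
  proof (induction rule: borel_set_induct)
    case empty
    then show ?case by (simp add: set_lebesgue_integral_def)
  next
    case (interval a b)
    then show ?case using interval_int by (simp add: set_lebesgue_integral_def mult.commute)
  next
    case (compl A)
    have "integrable lborel (\<lambda>x. indicator A x *\<^sub>R H x)"
      using compl.hyps by (intro integrable_mult_indicator int) auto
    moreover have "(\<lambda>x. indicator (-A) x *\<^sub>R H x) = (\<lambda>x. H x - indicator A x *\<^sub>R H x)"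
      by (auto simp: indicator_def fun_eq_iff)
    ultimately have "set_lebesgue_integral lborel (-A) H
        = integral\<^sup>L lborel H - set_lebesgue_integral lborel A H"
      unfolding set_lebesgue_integral_def using int by simp
    then show ?case using compl.IH total by simp
  next
    case (union f)
    have "set_lebesgue_integral lborel (\<Union>i. f i) H = (\<Sum>i. set_lebesgue_integral lborel (f i) H)"
    proof (rule lebesgue_integral_countable_add)
      show "f i \<in> sets lborel" for i using union.hyps by simp
      show "f i \<inter> f j = {}" if "i \<noteq> j" for i j
        using union.hyps(1) that by (simp add: disjoint_family_on_def)
      show "set_integrable lborel (\<Union>i. f i) H"
        unfolding set_integrable_def using union.hyps by (intro integrable_mult_indicator int) auto
    qed
    then show ?case using union.IH by simp
  qed
qed

lemma AE_eq_0_if_interval_integrals_eq_0: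
  fixes G :: "real \<Rightarrow> real"
  assumes local_int: "\<And>c d. integrable lborel (\<lambda>x. G x * indicator {c..d} x)"
    and interval_int: "\<And>a b. integral\<^sup>L lborel (\<lambda>x. G x * indicator {a..b} x) = 0"
  shows "AE x in lborel. G x = 0"
proof -
  have "AE x in lborel. G x * indicator {-real N..real N} x = 0" for N
  proof (rule integrable_AE_eq_0_if_interval_integrals_eq_0)
    fix a b :: real
    have "(\<lambda>x. G x * indicator {-real N..real N} x * indicator {a..b} x)
        = (\<lambda>x. G x * indicator {max a (-real N)..min b (real N)} x)"
      by (auto simp: indicator_def fun_eq_iff)
    then show "integral\<^sup>L lborel (\<lambda>x. G x * indicator {-real N..real N} x * indicator {a..b} x) = 0"
      using interval_int by simp
  qed (use local_int interval_int in auto)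
  then have "AE x in lborel. \<forall>N::nat. G x * indicator {-real N..real N} x = 0"
    by (subst AE_all_countable) blast
  then show ?thesis
  proof (rule AE_mp[OF _ AE_I2], intro impI)
    fix x assume vanish: "\<forall>N::nat. G x * indicator {-real N..real N} x = 0"
    obtain N :: nat where "\<bar>x\<bar> \<le> real N" using real_arch_simple by blast
    then show "G x = 0" using vanish[rule_format, of N] by (auto simp: indicator_def)
  qed
qed

lemma L2rho_AE_eq_if_test_integrals_eq:
  assumes g1: "L2rho g1" and g2: "L2rho g2"
    and eq: "\<And>\<phi>. test_fun \<phi> \<Longrightarrow>
      integral\<^sup>L lborel (\<lambda>x. g1 x * \<phi> x) = integral\<^sup>L lborel (\<lambda>x. g2 x * \<phi> x)"
  shows "AE x in lborel. g1 x = g2 x"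
proof -
  let ?G = "\<lambda>x. g1 x - g2 x"
  have [measurable]: "g1 \<in> borel_measurable lborel" "g2 \<in> borel_measurable lborel"
    using g1 g2 by (simp_all add: L2rho_def)
  have local_int: "integrable lborel (\<lambda>x. ?G x * indicator {c..d} x)" for c d
    using L2rho_integrable_mult_indicator[OF g1] L2rho_integrable_mult_indicator[OF g2]
    by (simp add: left_diff_distrib)
  have "integral\<^sup>L lborel (\<lambda>x. ?G x * \<phi> x) = 0" if "test_fun \<phi>" for \<phi>
    using eq[OF that] L2rho_integrable_mult_test_fun[OF g1 that] L2rho_integrable_mult_test_fun[OF g2 that]
    by (simp add: left_diff_distrib)
  then have "AE x in lborel. ?G x = 0"
    using local_int
    by (intro AE_eq_0_if_interval_integrals_eq_0 integral_mult_indicator_eq_0_if_test_fun) auto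
  then show ?thesis by auto
qed

lemma weak_derivs_AE_unique:
  assumes "weak_derivs \<alpha> f g" "weak_derivs \<alpha> f g'" "\<tau> \<le> \<alpha>"
  shows "AE x in lborel. g' \<tau> x = g \<tau> x"
proof (cases "\<tau> = 0")
  case True
  then show ?thesis using assms by (simp add: weak_derivs_def)
next
  case False
  show ?thesis
  proof (rule L2rho_AE_eq_if_test_integrals_eq)
    show "L2rho (g' \<tau>)" "L2rho (g \<tau>)" using assms by (auto simp: weak_derivs_def)
    fix \<phi> assume \<phi>: "test_fun \<phi>"
    have "1 \<le> \<tau>" "\<tau> \<le> \<alpha>" using False assms(3) by auto
    then have "(-1) ^ \<tau> * integral\<^sup>L lborel (\<lambda>x. g' \<tau> x * \<phi> x)
        = (-1) ^ \<tau> * integral\<^sup>L lborel (\<lambda>x. g \<tau> x * \<phi> x)"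
      using assms(1,2) \<phi> unfolding weak_derivs_def by (metis (no_types, lifting))
    then show "integral\<^sup>L lborel (\<lambda>x. g' \<tau> x * \<phi> x) = integral\<^sup>L lborel (\<lambda>x. g \<tau> x * \<phi> x)"
      by simp
  qed
qed

lemma Hnorm_eq:
  assumes w: "weak_derivs \<alpha> f g"
  shows "Hnorm \<alpha> f = sqrt (\<Sum>\<tau>\<le>\<alpha>. integral\<^sup>L lborel (\<lambda>x. (g \<tau> x)\<^sup>2 * gauss_rho x))"
proof -
  define g' where "g' = (SOME g. weak_derivs \<alpha> f g)"
  have w': "weak_derivs \<alpha> f g'"
    unfolding g'_def by (rule someI[where P="weak_derivs \<alpha> f", OF w])
  have "integral\<^sup>L lborel (\<lambda>x. (g' \<tau> x)\<^sup>2 * gauss_rho x) = integral\<^sup>L lborel (\<lambda>x. (g \<tau> x)\<^sup>2 * gauss_rho x)"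
    if "\<tau> \<le> \<alpha>" for \<tau>
  proof (rule integral_cong_AE)
    have "g' \<tau> \<in> borel_measurable lborel" "g \<tau> \<in> borel_measurable lborel"
      using w w' that by (auto simp: weak_derivs_def L2rho_def)
    moreover have "gauss_rho \<in> borel_measurable lborel"
      unfolding gauss_rho_def by measurable
    ultimately show "(\<lambda>x. (g' \<tau> x)\<^sup>2 * gauss_rho x) \<in> borel_measurable lborel"
      "(\<lambda>x. (g \<tau> x)\<^sup>2 * gauss_rho x) \<in> borel_measurable lborel" by measurable
    show "AE x in lborel. (g' \<tau> x)\<^sup>2 * gauss_rho x = (g \<tau> x)\<^sup>2 * gauss_rho x"
      using weak_derivs_AE_unique[OF w w' that] by auto
  qed
  then show ?thesis
    unfolding Hnorm_def g'_def[symmetric] Let_def by simp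
qed

lemma Hnorm_pos_if_gauss_int_nonzero:
  assumes w: "weak_derivs \<alpha> f g" and I: "gauss_int f \<noteq> 0"
  shows "Hnorm \<alpha> f > 0"
proof -
  have f_int: "integrable lborel (\<lambda>x. (f x)\<^sup>2 * gauss_rho x)"
    using w unfolding weak_derivs_def L2rho_def by force
  have nonneg: "0 \<le> integral\<^sup>L lborel (\<lambda>x. (g \<tau> x)\<^sup>2 * gauss_rho x)" for \<tau>
    by (intro Bochner_Integration.integral_nonneg) (simp add: less_imp_le[OF gauss_rho_pos])
  have "integral\<^sup>L lborel (\<lambda>x. (f x)\<^sup>2 * gauss_rho x) \<noteq> 0"
  proof
    assume "integral\<^sup>L lborel (\<lambda>x. (f x)\<^sup>2 * gauss_rho x) = 0"
    then have "AE x in lborel. (f x)\<^sup>2 * gauss_rho x = 0"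
      by (subst (asm) integral_nonneg_eq_0_iff_AE[OF f_int])
         (auto simp: less_imp_le[OF gauss_rho_pos])
    then have "AE x in lborel. f x * gauss_rho x = 0"
      by eventually_elim (use gauss_rho_pos in \<open>auto simp: less_imp_neq[symmetric]\<close>)
    then show False
      using I unfolding gauss_int_def by (simp add: integral_eq_zero_AE)
  qed
  then have "0 < integral\<^sup>L lborel (\<lambda>x. (g 0 x)\<^sup>2 * gauss_rho x)"
    using nonneg[of 0] w by (simp add: weak_derivs_def)
  also have "\<dots> \<le> (\<Sum>\<tau>\<le>\<alpha>. integral\<^sup>L lborel (\<lambda>x. (g \<tau> x)\<^sup>2 * gauss_rho x))"
    by (rule member_le_sum) (auto intro: nonneg)
  finally show ?thesis
    unfolding Hnorm_eq[OF w] by simp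
qed

lemma Hnorm_smooth:
  assumes "smooth f" "\<forall>x. x < a \<or> x > b \<longrightarrow> f x = 0"
  shows "Hnorm \<alpha> f = sqrt (\<Sum>\<tau>\<le>\<alpha>. integral\<^sup>L lborel (\<lambda>x. ((deriv ^^ \<tau>) f x)\<^sup>2 * gauss_rho x))"
  using Hnorm_eq[OF weak_derivs_smooth[OF assms]] .

lemma smooth_in_Hspace:
  assumes "smooth f" "\<forall>x. x < a \<or> x > b \<longrightarrow> f x = 0"
  shows "f \<in> Hspace \<alpha>"
  unfolding Hspace_def using smooth_continuous_on weak_derivs_smooth assms by blast

section \<open>Sums of rescaled bumps\<close>

lemma smooth_rescale: "smooth g \<Longrightarrow> smooth (\<lambda>x. g ((x - c) / h))"
  using smooth_affine[of g "1/h" "- c/h"] by (simp add: diff_divide_distrib)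

lemma deriv_funpow_rescaled_bump_eq_0:
  assumes "h > 0" "x < c + h/3 \<or> x > c + 2*h/3"
  shows "(deriv ^^ k) bump ((x - c) / h) = 0"
  using assms by (intro deriv_funpow_bump_eq_0) (auto simp: field_simps)

lemma deriv_funpow_rescaled_bump_vanishes_outside:
  assumes "h > 0"
  shows "\<forall>x. x < c \<or> x > c + h \<longrightarrow> (deriv ^^ k) bump ((x - c) / h) = 0"
  using deriv_funpow_rescaled_bump_eq_0[OF assms] assms by force

lemma rescaled_bump_eq_0:
  assumes "h > 0" "x < c + h/3 \<or> x > c + 2*h/3"
  shows "bump ((x - c) / h) = 0"
  using deriv_funpow_rescaled_bump_eq_0[OF assms, of 0] by simp

lemma deriv_funpow_rescaled_bumps_disjoint:
  assumes "h > 0" "h \<le> \<bar>c - c'\<bar>"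
  shows "(deriv ^^ k) bump ((x - c) / h) * (deriv ^^ k) bump ((x - c') / h) = 0"
proof (rule ccontr)
  assume "\<not> ?thesis"
  then have "c + h/3 \<le> x \<and> x \<le> c + 2*h/3" "c' + h/3 \<le> x \<and> x \<le> c' + 2*h/3"
    using deriv_funpow_rescaled_bump_eq_0[OF assms(1)] by (metis mult_zero_left mult_zero_right not_le)+
  then show False using assms by linarith
qed

lemma derivs_bounded_if_smooth_vanishing_outside:
  assumes f: "smooth f" "\<forall>x. x < a \<or> x > b \<longrightarrow> f x = 0"
  shows "\<exists>K>0. \<forall>\<tau>\<le>\<alpha>. \<forall>t. ((deriv ^^ \<tau>) f t)\<^sup>2 \<le> K"
proof -
  have "\<exists>M. \<forall>t\<in>{a..b}. \<bar>(deriv ^^ \<tau>) f t\<bar> \<le> M" for \<tau>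
  proof -
    have "compact ((deriv ^^ \<tau>) f ` {a..b})"
      by (intro compact_continuous_image continuous_on_subset[OF smooth_continuous_on]
          smooth_deriv_funpow f(1)) auto
    then obtain M where "\<forall>y\<in>(deriv ^^ \<tau>) f ` {a..b}. \<bar>y\<bar> \<le> M"
      using compact_imp_bounded bounded_real by blast
    then show ?thesis by auto
  qed
  then obtain M where M: "\<And>\<tau> t. t \<in> {a..b} \<Longrightarrow> \<bar>(deriv ^^ \<tau>) f t\<bar> \<le> M \<tau>" by metis
  define K where "K = 1 + (\<Sum>\<tau>\<le>\<alpha>. (M \<tau>)\<^sup>2)"
  have "K > 0" unfolding K_def by (simp add: add_pos_nonneg sum_nonneg)
  moreover have "((deriv ^^ \<tau>) f t)\<^sup>2 \<le> K" if "\<tau> \<le> \<alpha>" for \<tau> t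
  proof (cases "t \<in> {a..b}")
    case True
    have "((deriv ^^ \<tau>) f t)\<^sup>2 \<le> (M \<tau>)\<^sup>2"
      using M[OF True, of \<tau>] by (metis abs_ge_zero order_trans power2_abs power_mono)
    also have "\<dots> \<le> (\<Sum>\<tau>\<le>\<alpha>. (M \<tau>)\<^sup>2)"
      using that by (intro member_le_sum) auto
    finally show ?thesis unfolding K_def by simp
  next
    case False
    then show ?thesis using \<open>K > 0\<close> deriv_funpow_vanishes_outside[OF f, of \<tau>] by auto
  qed
  ultimately show ?thesis by blast
qed

lemma gauss_int_rescaled_bump_ge:
  assumes "h > 0" "c + h \<le> d"
  shows "exp (-10) / (5 * sqrt (2 * pi)) * h * exp (- max (c\<^sup>2) (d\<^sup>2) / 2)
    \<le> gauss_int (\<lambda>x. bump ((x - c) / h))"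
proof -
  define r where "r = exp (- max (c\<^sup>2) (d\<^sup>2) / 2) / sqrt (2 * pi)"
  let ?V = "\<lambda>x. exp (-10) * r * indicator {c + 2*h/5 .. c + 3*h/5} x"
  have "?V x \<le> bump ((x - c) / h) * gauss_rho x" for x
  proof (cases "x \<in> {c + 2*h/5 .. c + 3*h/5}")
    case True
    then have "(x - c) / h \<in> {2/5..3/5}" using assms(1) by (auto simp: field_simps)
    then have "exp (-10) \<le> bump ((x - c) / h)" by (rule bump_ge)
    moreover have "r \<le> gauss_rho x"
      unfolding r_def using True assms by (intro gauss_rho_ge_on_interval) auto
    moreover have "0 \<le> r" by (simp add: r_def)
    ultimately have "exp (-10) * r \<le> bump ((x - c) / h) * gauss_rho x"
      by (intro mult_mono) (auto simp: bump_nonneg)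
    then show ?thesis using True by simp
  next
    case False
    then show ?thesis using bump_nonneg gauss_rho_pos[of x] by simp
  qed
  moreover have "integrable lborel ?V"
    by (auto intro!: integrable_mult_right simp: emeasure_lborel_Icc_eq)
  moreover have "integrable lborel (\<lambda>x. bump ((x - c) / h) * gauss_rho x)"
    using deriv_funpow_rescaled_bump_vanishes_outside[OF assms(1), of c 0]
    by (intro integrable_continuous_vanishing_outside[of _ c "c + h"] continuous_intros
        smooth_continuous_on[OF smooth_rescale[OF smooth_bump]] continuous_on_gauss_rho) auto
  ultimately have "integral\<^sup>L lborel ?V \<le> gauss_int (\<lambda>x. bump ((x - c) / h))"
    unfolding gauss_int_def by (intro integral_mono)
  moreover have "integral\<^sup>L lborel ?V = exp (-10) * r * (h / 5)"
    using assms(1) by simp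
  ultimately show ?thesis by (simp add: r_def ac_simps)
qed

lemma weighted_sq_deriv_rescaled_bump_le:
  assumes "h > 0" "c + h \<le> d" and K: "\<And>t. ((deriv ^^ \<tau>) bump t)\<^sup>2 \<le> K"
  shows "integral\<^sup>L lborel (\<lambda>x. ((1/h) ^ \<tau> * (deriv ^^ \<tau>) bump ((x - c) / h))\<^sup>2 * gauss_rho x)
    \<le> (1/h) ^ (2 * \<tau>) * K * h * exp (- (ind_nonneg (c * d) * min (c\<^sup>2) (d\<^sup>2)) / 2) / sqrt (2 * pi)"
proof -
  define R where "R = exp (- (ind_nonneg (c * d) * min (c\<^sup>2) (d\<^sup>2)) / 2) / sqrt (2 * pi)"
  let ?D = "\<lambda>x. (deriv ^^ \<tau>) bump ((x - c) / h)"
  let ?U = "\<lambda>x. (1/h) ^ (2 * \<tau>) * K * R * indicator {c..c + h} x"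
  have "((1/h) ^ \<tau> * ?D x)\<^sup>2 * gauss_rho x \<le> ?U x" for x
  proof (cases "x \<in> {c..c + h}")
    case True
    have "gauss_rho x \<le> R"
      unfolding R_def using True assms by (intro gauss_rho_le_on_interval) auto
    then have "(?D x)\<^sup>2 * gauss_rho x \<le> K * R"
      using K gauss_rho_pos[of x] by (intro mult_mono) (auto intro: order_trans[OF zero_le_power2])
    moreover have "((1/h) ^ \<tau> * ?D x)\<^sup>2 = (1/h) ^ (2 * \<tau>) * (?D x)\<^sup>2"
      by (simp add: power_mult_distrib power_mult[symmetric] mult.commute)
    ultimately show ?thesis
      using True assms(1) by (simp add: mult_left_mono mult.assoc)
  next
    case False
    then show ?thesis
      using deriv_funpow_rescaled_bump_vanishes_outside[OF assms(1), of c \<tau>] by auto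
  qed
  moreover have "integrable lborel ?U"
    by (auto intro!: integrable_mult_right simp: emeasure_lborel_Icc_eq)
  moreover have "integrable lborel (\<lambda>x. ((1/h) ^ \<tau> * ?D x)\<^sup>2 * gauss_rho x)"
    using deriv_funpow_rescaled_bump_vanishes_outside[OF assms(1), of c \<tau>]
    by (intro integrable_continuous_vanishing_outside[of _ c "c + h"] continuous_intros
        smooth_continuous_on[OF smooth_rescale[OF smooth_deriv_funpow[OF smooth_bump]]]
        continuous_on_gauss_rho) auto
  ultimately have "integral\<^sup>L lborel (\<lambda>x. ((1/h) ^ \<tau> * ?D x)\<^sup>2 * gauss_rho x) \<le> integral\<^sup>L lborel ?U"
    by (intro integral_mono)
  also have "integral\<^sup>L lborel ?U = (1/h) ^ (2 * \<tau>) * K * R * h"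
    using assms(1) by simp
  finally show ?thesis by (simp add: R_def ac_simps)
qed

definition fooling_fun :: "real \<Rightarrow> (nat \<Rightarrow> real) \<Rightarrow> nat set \<Rightarrow> real \<Rightarrow> real" where
  "fooling_fun h \<xi> J x = (\<Sum>j\<in>J. bump ((x - \<xi> j) / h))"

lemma smooth_fooling_fun: "finite J \<Longrightarrow> smooth (fooling_fun h \<xi> J)"
  unfolding fooling_fun_def[abs_def] by (intro smooth_sum smooth_rescale smooth_bump)

lemma fooling_fun_eq_0:
  assumes "h > 0" "\<And>j. j \<in> J \<Longrightarrow> x \<le> \<xi> j \<or> \<xi> j + h \<le> x"
  shows "fooling_fun h \<xi> J x = 0"
  unfolding fooling_fun_def using assms by (force intro!: sum.neutral rescaled_bump_eq_0)

lemma fooling_fun_vanishes_outside: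
  assumes "h > 0" "finite J"
  shows "\<forall>x. x < - (\<Sum>j\<in>J. \<bar>\<xi> j\<bar>) \<or> x > (\<Sum>j\<in>J. \<bar>\<xi> j\<bar>) + h \<longrightarrow> fooling_fun h \<xi> J x = 0"
proof (intro allI impI fooling_fun_eq_0[OF assms(1)])
  fix x j assume "x < - (\<Sum>j\<in>J. \<bar>\<xi> j\<bar>) \<or> x > (\<Sum>j\<in>J. \<bar>\<xi> j\<bar>) + h" "j \<in> J"
  moreover have "\<bar>\<xi> j\<bar> \<le> (\<Sum>j\<in>J. \<bar>\<xi> j\<bar>)" if "j \<in> J"
    using assms(2) that by (intro member_le_sum) auto
  ultimately show "x \<le> \<xi> j \<or> \<xi> j + h \<le> x" by force
qed

lemma deriv_funpow_fooling_fun: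
  assumes "finite J"
  shows "(deriv ^^ \<tau>) (fooling_fun h \<xi> J)
    = (\<lambda>x. \<Sum>j\<in>J. (1/h) ^ \<tau> * (deriv ^^ \<tau>) bump ((x - \<xi> j) / h))"
  unfolding fooling_fun_def[abs_def]
  by (simp add: deriv_funpow_sum[OF assms] smooth_rescale smooth_bump deriv_funpow_rescale)

lemma gauss_int_fooling_fun_ge:
  assumes "h > 0" "finite J" "\<And>j. j \<in> J \<Longrightarrow> \<xi> j + h \<le> d j"
  shows "exp (-10) / (5 * sqrt (2 * pi)) * h * (\<Sum>j\<in>J. exp (- max ((\<xi> j)\<^sup>2) ((d j)\<^sup>2) / 2))
    \<le> gauss_int (fooling_fun h \<xi> J)"
proof -
  have "integrable lborel (\<lambda>x. bump ((x - \<xi> j) / h) * gauss_rho x)" for j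
    using deriv_funpow_rescaled_bump_vanishes_outside[OF assms(1), of "\<xi> j" 0]
    by (intro integrable_continuous_vanishing_outside[of _ "\<xi> j" "\<xi> j + h"] continuous_intros
        smooth_continuous_on[OF smooth_rescale[OF smooth_bump]] continuous_on_gauss_rho) auto
  then have "gauss_int (fooling_fun h \<xi> J) = (\<Sum>j\<in>J. gauss_int (\<lambda>x. bump ((x - \<xi> j) / h)))"
    unfolding gauss_int_def fooling_fun_def sum_distrib_right
    by (rule Bochner_Integration.integral_sum)
  moreover have "exp (-10) / (5 * sqrt (2 * pi)) * h * exp (- max ((\<xi> j)\<^sup>2) ((d j)\<^sup>2) / 2)
      \<le> gauss_int (\<lambda>x. bump ((x - \<xi> j) / h))" if "j \<in> J" for j
    using assms that by (intro gauss_int_rescaled_bump_ge) auto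
  ultimately show ?thesis
    by (simp add: sum_distrib_left sum_mono)
qed

lemma power2_sum_pairwise_zero_products:
  fixes a :: "'i \<Rightarrow> 'a :: comm_semiring_1"
  assumes "finite J" "\<And>i j. i \<in> J \<Longrightarrow> j \<in> J \<Longrightarrow> i \<noteq> j \<Longrightarrow> a i * a j = 0"
  shows "(\<Sum>j\<in>J. a j)\<^sup>2 = (\<Sum>j\<in>J. (a j)\<^sup>2)"
proof -
  have "(\<Sum>j\<in>J. a j)\<^sup>2 = (\<Sum>i\<in>J. \<Sum>j\<in>J. a i * a j)"
    by (simp add: power2_eq_square sum_product)
  also have "\<dots> = (\<Sum>i\<in>J. \<Sum>j\<in>J. if j = i then (a i)\<^sup>2 else 0)"
    using assms(2) by (intro sum.cong refl) (auto simp: power2_eq_square)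
  also have "\<dots> = (\<Sum>i\<in>J. (a i)\<^sup>2)"
    using assms(1) by simp
  finally show ?thesis .
qed

lemma weighted_sq_deriv_fooling_fun_le:
  assumes "h > 0" "finite J"
    and separated: "\<And>i j. i \<in> J \<Longrightarrow> j \<in> J \<Longrightarrow> i \<noteq> j \<Longrightarrow> h \<le> \<bar>\<xi> i - \<xi> j\<bar>"
    and "\<And>j. j \<in> J \<Longrightarrow> \<xi> j + h \<le> d j"
    and K: "\<And>t. ((deriv ^^ \<tau>) bump t)\<^sup>2 \<le> K"
  shows "integral\<^sup>L lborel (\<lambda>x. ((deriv ^^ \<tau>) (fooling_fun h \<xi> J) x)\<^sup>2 * gauss_rho x)
    \<le> (1/h) ^ (2 * \<tau>) * K * h
       * (\<Sum>j\<in>J. exp (- (ind_nonneg (\<xi> j * d j) * min ((\<xi> j)\<^sup>2) ((d j)\<^sup>2)) / 2)) / sqrt (2 * pi)"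
proof -
  let ?T = "\<lambda>j x. ((1/h) ^ \<tau> * (deriv ^^ \<tau>) bump ((x - \<xi> j) / h))\<^sup>2 * gauss_rho x"
  have "((deriv ^^ \<tau>) (fooling_fun h \<xi> J) x)\<^sup>2 * gauss_rho x = (\<Sum>j\<in>J. ?T j x)" for x
  proof -
    have "((deriv ^^ \<tau>) (fooling_fun h \<xi> J) x)\<^sup>2
        = (\<Sum>j\<in>J. ((1/h) ^ \<tau> * (deriv ^^ \<tau>) bump ((x - \<xi> j) / h))\<^sup>2)"
      unfolding deriv_funpow_fooling_fun[OF assms(2)]
      using deriv_funpow_rescaled_bumps_disjoint[OF assms(1) separated]
      by (intro power2_sum_pairwise_zero_products assms(2)) (simp add: algebra_simps)
    then show ?thesis by (simp add: sum_distrib_right)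
  qed
  moreover have "integrable lborel (?T j)" for j
    using deriv_funpow_rescaled_bump_vanishes_outside[OF assms(1), of "\<xi> j" \<tau>]
    by (intro integrable_continuous_vanishing_outside[of _ "\<xi> j" "\<xi> j + h"] continuous_intros
        smooth_continuous_on[OF smooth_rescale[OF smooth_deriv_funpow[OF smooth_bump]]]
        continuous_on_gauss_rho) auto
  ultimately have "integral\<^sup>L lborel (\<lambda>x. ((deriv ^^ \<tau>) (fooling_fun h \<xi> J) x)\<^sup>2 * gauss_rho x)
      = (\<Sum>j\<in>J. integral\<^sup>L lborel (?T j))"
    by (simp add: Bochner_Integration.integral_sum)
  also have "\<dots> \<le> (\<Sum>j\<in>J. (1/h) ^ (2 * \<tau>) * K * h
      * exp (- (ind_nonneg (\<xi> j * d j) * min ((\<xi> j)\<^sup>2) ((d j)\<^sup>2)) / 2) / sqrt (2 * pi))"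
    using assms by (intro sum_mono weighted_sq_deriv_rescaled_bump_le) auto
  finally show ?thesis
    by (simp add: sum_distrib_left sum_divide_distrib)
qed

section \<open>The lower bound for the worst-case error\<close>

lemma power_inverse_mult_le_powr:
  fixes h :: real and \<tau> \<alpha> :: nat
  assumes "h > 0" "\<tau> \<le> \<alpha>"
  shows "(1/h) ^ (2 * \<tau>) * h \<le> h powr (1 - 2 * (if h \<le> 1 then real \<alpha> else 0))"
proof -
  have "h powr (1 - 2 * real \<tau>) = h powr 1 / h powr (real (2 * \<tau>))"
    by (simp add: powr_diff)
  also have "\<dots> = h / h ^ (2 * \<tau>)"
    using assms(1) powr_realpow[OF assms(1), of "2 * \<tau>"] by simp
  finally have "(1/h) ^ (2 * \<tau>) * h = h powr (1 - 2 * real \<tau>)"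
    by (simp add: power_one_over field_simps)
  also have "\<dots> \<le> h powr (1 - 2 * (if h \<le> 1 then real \<alpha> else 0))"
  proof (cases "h \<le> 1")
    case True
    then show ?thesis using assms by (simp add: powr_mono')
  next
    case False
    then have "h powr (1 - 2 * real \<tau>) \<le> h powr 1" by (intro powr_mono) auto
    then show ?thesis using False assms(1) by simp
  qed
  finally show ?thesis .
qed

lemma Hnorm_fooling_fun_sq_le:
  assumes "h > 0" "finite J"
    and "\<And>i j. i \<in> J \<Longrightarrow> j \<in> J \<Longrightarrow> i \<noteq> j \<Longrightarrow> h \<le> \<bar>\<xi> i - \<xi> j\<bar>"
    and "\<And>j. j \<in> J \<Longrightarrow> \<xi> j + h \<le> d j"
    and K: "\<forall>\<tau>\<le>\<alpha>. \<forall>t. ((deriv ^^ \<tau>) bump t)\<^sup>2 \<le> K"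
  shows "(Hnorm \<alpha> (fooling_fun h \<xi> J))\<^sup>2
    \<le> (real \<alpha> + 1) * K / sqrt (2 * pi) * h powr (1 - 2 * (if h \<le> 1 then real \<alpha> else 0))
       * (\<Sum>j\<in>J. exp (- (ind_nonneg (\<xi> j * d j) * min ((\<xi> j)\<^sup>2) ((d j)\<^sup>2)) / 2))"
    (is "_ \<le> _ * K / _ * ?hp * ?S2")
proof -
  let ?I = "\<lambda>\<tau>. integral\<^sup>L lborel (\<lambda>x. ((deriv ^^ \<tau>) (fooling_fun h \<xi> J) x)\<^sup>2 * gauss_rho x)"
  have "K \<ge> 0" using K by (auto intro: order_trans[OF zero_le_power2])
  have "?S2 \<ge> 0" by (intro sum_nonneg) simp
  have "(Hnorm \<alpha> (fooling_fun h \<xi> J))\<^sup>2 = (\<Sum>\<tau>\<le>\<alpha>. ?I \<tau>)"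
    using Hnorm_smooth[OF smooth_fooling_fun fooling_fun_vanishes_outside] assms(1,2)
    by (simp add: sum_nonneg less_imp_le[OF gauss_rho_pos])
  also have "\<dots> \<le> (\<Sum>\<tau>\<le>\<alpha>. K * ?S2 / sqrt (2 * pi) * ((1/h) ^ (2 * \<tau>) * h))"
  proof (intro sum_mono)
    fix \<tau> assume "\<tau> \<in> {..\<alpha>}"
    then have "?I \<tau> \<le> (1/h) ^ (2 * \<tau>) * K * h * ?S2 / sqrt (2 * pi)"
      using assms by (intro weighted_sq_deriv_fooling_fun_le) auto
    then show "?I \<tau> \<le> K * ?S2 / sqrt (2 * pi) * ((1/h) ^ (2 * \<tau>) * h)"
      by (simp add: ac_simps)
  qed
  also have "\<dots> \<le> (\<Sum>\<tau>\<le>\<alpha>. K * ?S2 / sqrt (2 * pi) * ?hp)"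
    using assms(1) \<open>K \<ge> 0\<close> \<open>?S2 \<ge> 0\<close>
    by (intro sum_mono mult_left_mono power_inverse_mult_le_powr) auto
  finally show ?thesis by (simp add: ac_simps)
qed

lemma ratio_lower_bound:
  fixes h S1 S2 C1 C2 I N \<sigma> :: real
  assumes "h > 0" "S2 > 0" "C2 > 0" "C1 \<ge> 0" "S1 \<ge> 0" "C1 * h * S1 \<le> I"
    and "N > 0" "N\<^sup>2 \<le> C2 * h powr (1 - 2 * \<sigma>) * S2"
  shows "C1 / sqrt C2 * h powr (\<sigma> + 1/2) * S1 * S2 powr (-1/2) \<le> I / N"
proof -
  define B where "B = h powr ((1 - 2 * \<sigma>) / 2)"
  define U where "U = sqrt C2 * B * sqrt S2"
  have "B > 0" "U > 0" using assms by (simp_all add: B_def U_def)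
  have "N \<le> sqrt (C2 * h powr (1 - 2 * \<sigma>) * S2)"
    using assms by (intro real_le_rsqrt) simp
  also have "\<dots> = U"
    using assms by (simp add: U_def B_def real_sqrt_mult powr_half_sqrt_powr[symmetric])
  finally have "N \<le> U" .
  have "h powr (\<sigma> + 1/2) * B = h powr ((\<sigma> + 1/2) + (1 - 2 * \<sigma>) / 2)"
    unfolding B_def by (rule powr_add[symmetric])
  also have "(\<sigma> + 1/2) + (1 - 2 * \<sigma>) / 2 = 1" by (simp add: field_simps)
  also have "h powr 1 = h" using assms(1) by simp
  finally have "h powr (\<sigma> + 1/2) = h / B"
    using \<open>B > 0\<close> by (intro eq_divide_imp) auto
  moreover have "S2 powr (-1/2) = 1 / sqrt S2"
    using powr_minus_divide[of S2 "1/2"] powr_half_sqrt[of S2] assms(2) by simp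
  ultimately have "C1 / sqrt C2 * h powr (\<sigma> + 1/2) * S1 * S2 powr (-1/2) = C1 * h * S1 / U"
    by (simp add: U_def)
  also have "\<dots> \<le> I / U"
    using assms(6) \<open>U > 0\<close> by (simp add: divide_right_mono)
  also have "\<dots> \<le> I / N"
  proof (rule divide_left_mono)
    show "0 \<le> I" using assms by (metis mult_nonneg_nonneg less_imp_le order_trans)
  qed (use assms \<open>N \<le> U\<close> in auto)
  finally show ?thesis .
qed

lemma nodes_separated:
  fixes \<xi> :: "nat \<Rightarrow> real"
  assumes gaps: "\<And>j. j \<in> {1..<n} \<Longrightarrow> \<xi> j + h \<le> \<xi> (Suc j)" and "h \<ge> 0"
    and "i \<in> {1..n}" "j \<in> {1..n}" "i \<noteq> j"
  shows "h \<le> \<bar>\<xi> i - \<xi> j\<bar>"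
proof -
  have order: "\<xi> k + h \<le> \<xi> l" if "1 \<le> k" "k < l" "l \<le> n" for k l
  proof -
    have "Suc k \<le> l" using that by simp
    then show ?thesis
      using \<open>l \<le> n\<close>
    proof (induction l rule: dec_induct)
      case base
      then show ?case using gaps \<open>1 \<le> k\<close> by simp
    next
      case (step m)
      then have "\<xi> m + h \<le> \<xi> (Suc m)" using gaps \<open>1 \<le> k\<close> by simp
      then show ?case using step \<open>h \<ge> 0\<close> by simp
    qed
  qed
  show ?thesis
    using order[of i j] order[of j i] assms(3-5) by (cases "i < j") auto
qed

lemma quad_fooling_fun_eq_0:
  assumes "h > 0"
    and separated: "\<And>i j. i \<in> {1..n} \<Longrightarrow> j \<in> {1..n} \<Longrightarrow> i \<noteq> j \<Longrightarrow> h \<le> \<bar>\<xi> i - \<xi> j\<bar>"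
  shows "quad n \<xi> w (fooling_fun h \<xi> {1..<n}) = 0"
  unfolding quad_def
proof (intro sum.neutral ballI)
  fix i assume i: "i \<in> {1..n}"
  have "fooling_fun h \<xi> {1..<n} (\<xi> i) = 0"
  proof (rule fooling_fun_eq_0[OF \<open>h > 0\<close>])
    fix j assume "j \<in> {1..<n}"
    then show "\<xi> i \<le> \<xi> j \<or> \<xi> j + h \<le> \<xi> i"
      using separated[OF i, of j] by (cases "i = j") auto
  qed
  then show "w i * fooling_fun h \<xi> {1..<n} (\<xi> i) = 0" by simp
qed

lemma error_ratio_le_wce: "f \<in> Hspace \<alpha> \<Longrightarrow> f \<noteq> (\<lambda>_. 0) \<Longrightarrow>
    ereal (\<bar>gauss_int f - quad n \<xi> w f\<bar> / Hnorm \<alpha> f) \<le> wce \<alpha> n \<xi> w"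
  unfolding wce_def by (rule SUP_upper) simp

lemma wce_lower_bound:
  fixes \<alpha> n :: nat and \<xi> w :: "nat \<Rightarrow> real"
  assumes "n \<ge> 2" and increasing: "\<forall>j\<in>{1..<n}. \<xi> j < \<xi> (Suc j)"
    and "K > 0" and K: "\<forall>\<tau>\<le>\<alpha>. \<forall>t. ((deriv ^^ \<tau>) bump t)\<^sup>2 \<le> K"
  defines "h \<equiv> Min ((\<lambda>i. \<xi> (Suc i) - \<xi> i) ` {1..<n})"
  shows "ereal (exp (-10) / (5 * sqrt (2 * pi)) / sqrt ((real \<alpha> + 1) * K / sqrt (2 * pi))
      * h powr ((if h \<le> 1 then real \<alpha> else 0) + 1/2)
      * (\<Sum>j=1..<n. exp (- max ((\<xi> j)\<^sup>2) ((\<xi> (Suc j))\<^sup>2) / 2))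
      * (\<Sum>j=1..<n. exp (- (ind_nonneg (\<xi> j * \<xi> (Suc j)) * min ((\<xi> j)\<^sup>2) ((\<xi> (Suc j))\<^sup>2)) / 2))
          powr (-1/2))
    \<le> wce \<alpha> n \<xi> w"
    (is "ereal (?C1 / sqrt ?C2 * h powr (?\<sigma> + 1/2) * ?S1 * ?S2 powr (-1/2)) \<le> _")
proof -
  define f where "f = fooling_fun h \<xi> {1..<n}"
  have J: "finite {1..<n}" "{1..<n} \<noteq> {}" using \<open>n \<ge> 2\<close> by auto
  have "h > 0"
    unfolding h_def using J increasing by (subst Min_gr_iff) auto
  have gaps: "\<xi> j + h \<le> \<xi> (Suc j)" if "j \<in> {1..<n}" for j
  proof -
    have "h \<le> \<xi> (Suc j) - \<xi> j" unfolding h_def using J that by (intro Min_le) auto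
    then show ?thesis by simp
  qed
  have separated: "h \<le> \<bar>\<xi> i - \<xi> j\<bar>" if "i \<in> {1..n}" "j \<in> {1..n}" "i \<noteq> j" for i j
    using gaps \<open>h > 0\<close> that by (intro nodes_separated[where n=n]) auto
  have "quad n \<xi> w f = 0"
    unfolding f_def by (rule quad_fooling_fun_eq_0[OF \<open>h > 0\<close> separated])
  have I: "?C1 * h * ?S1 \<le> gauss_int f"
    unfolding f_def by (intro gauss_int_fooling_fun_ge \<open>h > 0\<close> J gaps)
  then have "gauss_int f > 0" using \<open>h > 0\<close> J by (intro order.strict_trans2[OF _ I] mult_pos_pos sum_pos) auto
  have "(Hnorm \<alpha> f)\<^sup>2 \<le> ?C2 * h powr (1 - 2 * ?\<sigma>) * ?S2"
    unfolding f_def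
    by (rule Hnorm_fooling_fun_sq_le[where d="\<lambda>j. \<xi> (Suc j)"])
       (use \<open>h > 0\<close> J(1) gaps K separated in auto)
  moreover have "Hnorm \<alpha> f > 0" "f \<in> Hspace \<alpha>"
  proof -
    have "smooth f" unfolding f_def using J(1) by (rule smooth_fooling_fun)
    moreover note vanish = fooling_fun_vanishes_outside[OF \<open>h > 0\<close> J(1), of \<xi>, folded f_def]
    ultimately show "Hnorm \<alpha> f > 0" "f \<in> Hspace \<alpha>"
      using \<open>gauss_int f > 0\<close>
      by (auto intro: Hnorm_pos_if_gauss_int_nonzero[OF weak_derivs_smooth] smooth_in_Hspace)
  qed
  ultimately have "?C1 / sqrt ?C2 * h powr (?\<sigma> + 1/2) * ?S1 * ?S2 powr (-1/2)
      \<le> \<bar>gauss_int f - quad n \<xi> w f\<bar> / Hnorm \<alpha> f"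
    using I \<open>quad n \<xi> w f = 0\<close> \<open>gauss_int f > 0\<close> \<open>h > 0\<close> \<open>K > 0\<close> J
    by (intro ratio_lower_bound) (auto intro!: sum_pos sum_nonneg)
  also have "ereal \<dots> \<le> wce \<alpha> n \<xi> w"
    using \<open>f \<in> Hspace \<alpha>\<close> \<open>gauss_int f > 0\<close> by (intro error_ratio_le_wce) (auto simp: gauss_int_def)
  finally show ?thesis by simp
qed

theorem lemma3p1:
  fixes \<alpha> :: nat
  assumes "\<alpha> \<ge> 1"
  shows "\<exists>c>0. \<forall>(n::nat) (\<xi>::nat \<Rightarrow> real) (w::nat \<Rightarrow> real).
     n \<ge> 2 \<and> (\<forall>j\<in>{1..<n}. \<xi> j < \<xi> (Suc j)) \<longrightarrow>
     (let h = Min ((\<lambda>i. \<xi> (Suc i) - \<xi> i) ` {1..<n});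
          \<sigma> = (if h \<le> 1 then real \<alpha> else 0)
      in ereal (c * h powr (\<sigma> + 1/2)
          * (\<Sum>j=1..<n. exp (- max ((\<xi> j)\<^sup>2) ((\<xi> (Suc j))\<^sup>2) / 2))
          * (\<Sum>k=1..<n. exp (- (ind_nonneg (\<xi> k * \<xi> (Suc k))
                 * min ((\<xi> k)\<^sup>2) ((\<xi> (Suc k))\<^sup>2)) / 2)) powr (-1/2))
         \<le> wce \<alpha> n \<xi> w)"
proof -
  have "\<forall>x. x < 1/3 \<or> x > 2/3 \<longrightarrow> bump x = 0" using bump_eq_0 by blast
  then obtain K where "K > 0" "\<forall>\<tau>\<le>\<alpha>. \<forall>t. ((deriv ^^ \<tau>) bump t)\<^sup>2 \<le> K"
    using derivs_bounded_if_smooth_vanishing_outside[OF smooth_bump] by blast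
  then show ?thesis
    using wce_lower_bound[of _ _ K \<alpha>]
    by (intro exI[of _ "exp (-10) / (5 * sqrt (2 * pi)) / sqrt ((real \<alpha> + 1) * K / sqrt (2 * pi))"])
       (auto simp: Let_def)
qed

end
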